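(* Let $(n_k)_{k\geq1}$ be a strictly increasing sequence of positive integers, $K\geq2$, $s>1$, $\alpha\in(0,1)$, and let $$m_k=\left\lceil\frac{n_k}{\theta}\ln\left(\frac{\zeta(s)\,n_k^{s+1}}{\alpha}\right)\right\rceil,\qquad k=1,\ldots,K.$$ Let $B_2,\ldots,B_K$ be mutually independent random variables with $B_k\sim\mathrm{Bin}\left(m_k,\frac{n_k-n_{k-1}}{n_k}\right)$ (number of trials $m_k$, success probability $\frac{n_k-n_{k-1}}{n_k}$), and let $U_K=\sum_{k=2}^KB_k$. Then $$\mathrm{Var}(U_K)<\mathbb{E}(U_K)\leq m_K+n_K-m_1.$$
   Context: $\zeta$ denotes the Riemann zeta function and $\theta=\frac{3\ln(3/2)-1}{2}\approx0.108$. *)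

theory Defs
  imports "HOL-Probability.Probability"
begin

definition zeta_real :: "real \<Rightarrow> real" where
  "zeta_real s = (\<Sum>j. 1 / (real (Suc j)) powr s)"

definition theta :: real where
  "theta = (3 * ln (3/2) - 1) / 2"

text \<open>m_k = ceiling((n_k / theta) * ln(zeta(s) n_k^(s+1) / alpha)); this is positive, so nat is harmless.\<close>
definition m_seq :: "(nat \<Rightarrow> nat) \<Rightarrow> real \<Rightarrow> real \<Rightarrow> nat \<Rightarrow> nat" where
  "m_seq n s \<alpha> k =
     nat \<lceil>(real (n k) / theta) * ln (zeta_real s * real (n k) powr (s + 1) / \<alpha>)\<rceil>"

end

(* With p_k = (n_k - n_{k-1}) / n_k, independence makes the variance of U_K additive, so
   Var U_K = sum m_k p_k (1 - p_k) < sum m_k p_k = E U_K.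
   For the upper bound let g(x) = ln (zeta(s) x^(s+1) / alpha) / theta + 1, which increases with x.
   Since n_k >= 1, m_k < n_k (g(n_k) - 1) + 1 <= n_k g(n_k), hence m_k p_k <= (n_k - n_{k-1}) g(n_k),
   and summation by parts against the increasing weights g(n_k) bounds E U_K by
   n_K g(n_K) - n_1 g(n_1) <= m_K + n_K - m_1. *)

theory Submission
  imports Defs
begin

lemma binomial_sum_times_index:
  fixes p q :: "'a::comm_semiring_1"
  shows "(\<Sum>k\<le>Suc n. of_nat (Suc n choose k) * p ^ k * q ^ (Suc n - k) * of_nat k * f k)
       = of_nat (Suc n) * p * (\<Sum>k\<le>n. of_nat (n choose k) * p ^ k * q ^ (n - k) * f (Suc k))"
proof -
  have absorb: "of_nat (Suc n choose Suc k) * of_nat (Suc k) = (of_nat (Suc n) * of_nat (n choose k) :: 'a)"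
    for k by (metis Suc_times_binomial mult.commute of_nat_mult)
  have "(\<Sum>k\<le>Suc n. of_nat (Suc n choose k) * p ^ k * q ^ (Suc n - k) * of_nat k * f k)
      = (\<Sum>k\<le>n. (of_nat (Suc n choose Suc k) * of_nat (Suc k)) * p ^ Suc k * q ^ (n - k) * f (Suc k))"
    by (subst sum.atMost_Suc_shift) (simp add: ac_simps del: of_nat_Suc)
  also have "\<dots> = of_nat (Suc n) * p * (\<Sum>k\<le>n. of_nat (n choose k) * p ^ k * q ^ (n - k) * f (Suc k))"
    by (simp only: absorb sum_distrib_left) (simp add: ac_simps)
  finally show ?thesis .
qed

lemma binomial_weights_sum:
  fixes p :: "'a::comm_ring_1"
  shows "(\<Sum>k\<le>n. of_nat (n choose k) * p ^ k * (1 - p) ^ (n - k)) = 1"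
  using binomial_ring[of p "1 - p" n] by (simp add: atLeast0AtMost)

lemma binomial_weights_mean:
  fixes p :: "'a::comm_ring_1"
  shows "(\<Sum>k\<le>n. of_nat (n choose k) * p ^ k * (1 - p) ^ (n - k) * of_nat k) = of_nat n * p"
proof (cases n)
  case (Suc m)
  then show ?thesis
    using binomial_sum_times_index[of m p "1 - p" "\<lambda>_. 1"] by (simp add: binomial_weights_sum)
qed simp

lemma binomial_weights_second_moment:
  fixes p :: "'a::comm_ring_1"
  shows "(\<Sum>k\<le>n. of_nat (n choose k) * p ^ k * (1 - p) ^ (n - k) * of_nat k ^ 2)
       = of_nat n * p * ((of_nat n - 1) * p + 1)"
proof (cases n)
  case (Suc m)
  have "(\<Sum>k\<le>m. of_nat (m choose k) * p ^ k * (1 - p) ^ (m - k) * of_nat (Suc k))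
      = (\<Sum>k\<le>m. of_nat (m choose k) * p ^ k * (1 - p) ^ (m - k) * of_nat k)
        + (\<Sum>k\<le>m. of_nat (m choose k) * p ^ k * (1 - p) ^ (m - k))"
    by (simp add: distrib_left sum.distrib)
  also have "\<dots> = of_nat m * p + 1"
    by (simp only: binomial_weights_sum binomial_weights_mean)
  finally show ?thesis
    using Suc binomial_sum_times_index[of m p "1 - p" of_nat] by (simp add: power2_eq_square mult.assoc)
qed simp

lemma expectation_binomial_pmf:
  assumes "p \<in> {0..1}"
  shows "measure_pmf.expectation (binomial_pmf n p) real = real n * p"
  using assms by (simp add: expectation_binomial_pmf' binomial_weights_mean)

lemma variance_binomial_pmf:
  assumes "p \<in> {0..1}"
  shows "measure_pmf.variance (binomial_pmf n p) real = real n * p * (1 - p)"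
proof -
  have "measure_pmf.variance (binomial_pmf n p) real
      = measure_pmf.expectation (binomial_pmf n p) (\<lambda>k. (real k)\<^sup>2)
        - (measure_pmf.expectation (binomial_pmf n p) real)\<^sup>2"
    by (rule measure_pmf.variance_eq) (use assms in auto)
  also have "\<dots> = real n * p * ((real n - 1) * p + 1) - (real n * p)\<^sup>2"
    using assms
    by (simp only: expectation_binomial_pmf)
       (simp add: expectation_binomial_pmf' binomial_weights_second_moment)
  also have "\<dots> = real n * p * (1 - p)"
    by (simp add: power2_eq_square algebra_simps)
  finally show ?thesis .
qed

context prob_space
begin

lemma
  fixes f :: "'b \<Rightarrow> 'c::{banach, second_countable_topology}"
  assumes "X \<in> measurable M (count_space UNIV)" and "distr M (count_space UNIV) X = measure_pmf q"
  shows integrable_pmf_distributed: "integrable M (\<lambda>\<omega>. f (X \<omega>)) \<longleftrightarrow> integrable q f"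
    and expectation_pmf_distributed: "expectation (\<lambda>\<omega>. f (X \<omega>)) = measure_pmf.expectation q f"
  using integrable_distr_eq[OF assms(1), of f] integral_distr[OF assms(1), of f] assms(2) by simp_all

lemma variance_pmf_distributed:
  fixes f :: "'b \<Rightarrow> real"
  assumes "X \<in> measurable M (count_space UNIV)" and "distr M (count_space UNIV) X = measure_pmf q"
  shows "variance (\<lambda>\<omega>. f (X \<omega>)) = measure_pmf.variance q f"
  using expectation_pmf_distributed[OF assms, of f]
    expectation_pmf_distributed[OF assms, of "\<lambda>x. (f x - measure_pmf.expectation q f)\<^sup>2"]
  by simp

lemma variance_sum_indep:
  fixes X :: "'i \<Rightarrow> 'a \<Rightarrow> real"
  assumes "finite I" and indep: "indep_vars (\<lambda>_. borel) X I"
    and square_int: "\<And>i. i \<in> I \<Longrightarrow> integrable M (\<lambda>\<omega>. (X i \<omega>)\<^sup>2)"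
  shows "variance (\<lambda>\<omega>. \<Sum>i\<in>I. X i \<omega>) = (\<Sum>i\<in>I. variance (X i))"
proof -
  define Y where "Y i \<omega> = X i \<omega> - expectation (X i)" for i \<omega>
  have rv: "random_variable borel (X i)" if "i \<in> I" for i
    using indep that by (simp add: indep_vars_def)
  have int: "integrable M (X i)" if "i \<in> I" for i
    using rv[OF that] square_int[OF that] by (rule square_integrable_imp_integrable)
  have int_Y: "integrable M (Y i)" if "i \<in> I" for i
    unfolding Y_def using int[OF that] by (intro Bochner_Integration.integrable_diff) simp_all
  have mean_Y: "expectation (Y i) = 0" if "i \<in> I" for i
    unfolding Y_def using int[OF that] by (simp add: prob_space)
  have indep_Y: "indep_vars (\<lambda>_. borel) Y I"
    unfolding Y_def by (rule indep_vars_compose2[OF indep]) simp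
  have covariance: "integrable M (\<lambda>\<omega>. Y i \<omega> * Y j \<omega>)
      \<and> expectation (\<lambda>\<omega>. Y i \<omega> * Y j \<omega>) = (if i = j then variance (X i) else 0)"
    if "i \<in> I" "j \<in> I" for i j
  proof (cases "i = j")
    case True
    have "(\<lambda>\<omega>. Y i \<omega> * Y i \<omega>) = (\<lambda>\<omega>. (X i \<omega>)\<^sup>2 - 2 * expectation (X i) * X i \<omega> + (expectation (X i))\<^sup>2)"
      by (simp add: Y_def fun_eq_iff power2_eq_square algebra_simps)
    moreover have "integrable M (\<lambda>\<omega>. (X i \<omega>)\<^sup>2 - 2 * expectation (X i) * X i \<omega> + (expectation (X i))\<^sup>2)"
      using int[OF that(1)] square_int[OF that(1)] by simp
    ultimately show ?thesis
      using True by (simp add: Y_def power2_eq_square)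
  next
    case False
    have "indep_vars (\<lambda>_. borel) Y {i, j}"
      by (rule indep_vars_subset[OF indep_Y]) (use that in auto)
    then have "integrable M (\<lambda>\<omega>. \<Prod>l\<in>{i, j}. Y l \<omega>)
        \<and> expectation (\<lambda>\<omega>. \<Prod>l\<in>{i, j}. Y l \<omega>) = (\<Prod>l\<in>{i, j}. expectation (Y l))"
      using int_Y that by (auto intro!: indep_vars_integrable indep_vars_lebesgue_integral)
    then show ?thesis
      using False mean_Y that by simp
  qed
  have "expectation (\<lambda>\<omega>. \<Sum>i\<in>I. X i \<omega>) = (\<Sum>i\<in>I. expectation (X i))"
    using int by (rule Bochner_Integration.integral_sum)
  then have centred: "(\<Sum>i\<in>I. X i \<omega>) - expectation (\<lambda>\<omega>. \<Sum>i\<in>I. X i \<omega>) = (\<Sum>i\<in>I. Y i \<omega>)"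
    for \<omega> by (simp add: Y_def sum_subtractf)
  have "variance (\<lambda>\<omega>. \<Sum>i\<in>I. X i \<omega>) = expectation (\<lambda>\<omega>. \<Sum>i\<in>I. \<Sum>j\<in>I. Y i \<omega> * Y j \<omega>)"
    by (simp only: centred power2_eq_square sum_product)
  also have "\<dots> = (\<Sum>i\<in>I. \<Sum>j\<in>I. expectation (\<lambda>\<omega>. Y i \<omega> * Y j \<omega>))"
    using covariance
    by (simp add: Bochner_Integration.integral_sum Bochner_Integration.integrable_sum del: integral_sum')
  also have "\<dots> = (\<Sum>i\<in>I. variance (X i))"
    using covariance \<open>finite I\<close> by (simp add: sum.delta cong: sum.cong)
  finally show ?thesis .
qed

lemma sum_indep_binomial_moments:
  fixes X :: "'i \<Rightarrow> 'a \<Rightarrow> nat"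
  assumes "finite I" and indep: "indep_vars (\<lambda>_. count_space UNIV) X I"
    and distr: "\<And>i. i \<in> I \<Longrightarrow> distr M (count_space UNIV) (X i) = measure_pmf (binomial_pmf (N i) (p i))"
    and p: "\<And>i. i \<in> I \<Longrightarrow> p i \<in> {0..1}"
  shows "expectation (\<lambda>\<omega>. \<Sum>i\<in>I. real (X i \<omega>)) = (\<Sum>i\<in>I. real (N i) * p i)"
    and "variance (\<lambda>\<omega>. \<Sum>i\<in>I. real (X i \<omega>)) = (\<Sum>i\<in>I. real (N i) * p i * (1 - p i))"
proof -
  have rv: "X i \<in> measurable M (count_space UNIV)" if "i \<in> I" for i
    using indep that by (simp add: indep_vars_def)
  have int: "integrable M (\<lambda>\<omega>. f (X i \<omega>))" if "i \<in> I" for i and f :: "nat \<Rightarrow> real"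
    using integrable_pmf_distributed[OF rv distr, of i f] p[OF that] that by simp
  have mean: "expectation (\<lambda>\<omega>. real (X i \<omega>)) = real (N i) * p i" if "i \<in> I" for i
    using expectation_pmf_distributed[OF rv distr, of i real] p[OF that] that
    by (simp add: expectation_binomial_pmf)
  have var: "variance (\<lambda>\<omega>. real (X i \<omega>)) = real (N i) * p i * (1 - p i)" if "i \<in> I" for i
    using variance_pmf_distributed[OF rv distr, of i real] p[OF that] that
    by (simp add: variance_binomial_pmf)
  show "expectation (\<lambda>\<omega>. \<Sum>i\<in>I. real (X i \<omega>)) = (\<Sum>i\<in>I. real (N i) * p i)"
    using int mean by (simp add: Bochner_Integration.integral_sum)
  have "variance (\<lambda>\<omega>. \<Sum>i\<in>I. real (X i \<omega>)) = (\<Sum>i\<in>I. variance (\<lambda>\<omega>. real (X i \<omega>)))"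
  proof (rule variance_sum_indep)
    show "indep_vars (\<lambda>_. borel) (\<lambda>i \<omega>. real (X i \<omega>)) I"
      by (rule indep_vars_compose2[OF indep]) simp
  qed (use \<open>finite I\<close> int in simp_all)
  then show "variance (\<lambda>\<omega>. \<Sum>i\<in>I. real (X i \<omega>)) = (\<Sum>i\<in>I. real (N i) * p i * (1 - p i))"
    using var by simp
qed

end

lemma sum_increments_mult_le:
  fixes a g :: "nat \<Rightarrow> 'a::linordered_idom"
  assumes g_mono: "\<And>k. 1 \<le> k \<Longrightarrow> g k \<le> g (Suc k)" and a_nonneg: "\<And>k. 1 \<le> k \<Longrightarrow> 0 \<le> a k"
    and "1 \<le> K"
  shows "(\<Sum>k=2..K. (a k - a (k - 1)) * g k) \<le> a K * g K - a 1 * g 1"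
  using \<open>1 \<le> K\<close>
proof (induction K rule: dec_induct)
  case (step K)
  have "a K * g K \<le> a K * g (Suc K)"
    using g_mono a_nonneg step.hyps by (simp add: mult_left_mono)
  then show ?case
    using step by (simp add: sum.atLeast_Suc_atMost_Suc_shift algebra_simps)
qed simp

lemma theta_pos: "0 < theta"
proof -
  have "exp 1 < (3/2 :: real) ^ 3"
    using e_less_272 by (simp add: eval_nat_numeral)
  also have "\<dots> = exp (3 * ln (3/2))"
    by (metis exp_ln exp_of_nat_mult of_nat_numeral zero_less_divide_iff zero_less_numeral)
  finally show ?thesis
    unfolding theta_def by simp
qed

lemma zeta_real_ge_1:
  assumes "1 < s"
  shows "1 \<le> zeta_real s"
proof -
  have "summable (\<lambda>j. real (Suc j) powr (-s))"
    using assms by (subst summable_Suc_iff) (simp add: summable_real_powr_iff)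
  then have "summable (\<lambda>j. 1 / real (Suc j) powr s)"
    by (simp add: powr_minus_divide)
  then have "(\<Sum>j<1. 1 / real (Suc j) powr s) \<le> zeta_real s"
    unfolding zeta_real_def by (rule sum_le_suminf) auto
  then show ?thesis
    by simp
qed

definition m_factor :: "real \<Rightarrow> real \<Rightarrow> real \<Rightarrow> real" where
  "m_factor s \<alpha> x = ln (zeta_real s * x powr (s + 1) / \<alpha>) / theta"

lemma m_seq_eq_m_factor: "m_seq n s \<alpha> k = nat \<lceil>real (n k) * m_factor s \<alpha> (real (n k))\<rceil>"
  by (simp add: m_seq_def m_factor_def)

lemma m_factor_pos:
  assumes "1 < s" "0 < \<alpha>" "\<alpha> < 1" "1 \<le> x"
  shows "0 < m_factor s \<alpha> x"
proof -
  have "1 \<le> x powr (s + 1)"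
    using assms by (simp add: ge_one_powr_ge_zero)
  then have "1 \<le> zeta_real s * x powr (s + 1)"
    using mult_mono'[of 1 "zeta_real s" 1 "x powr (s + 1)"] zeta_real_ge_1[OF \<open>1 < s\<close>] by simp
  then have "1 < zeta_real s * x powr (s + 1) / \<alpha>"
    using assms by (simp add: less_divide_eq)
  then show ?thesis
    unfolding m_factor_def using theta_pos by simp
qed

lemma m_factor_mono:
  assumes "1 < s" "0 < \<alpha>" "1 \<le> x" "x \<le> y"
  shows "m_factor s \<alpha> x \<le> m_factor s \<alpha> y"
proof -
  have "x powr (s + 1) \<le> y powr (s + 1)"
    using assms by (intro powr_mono2) auto
  then have "zeta_real s * x powr (s + 1) / \<alpha> \<le> zeta_real s * y powr (s + 1) / \<alpha>"
    using assms zeta_real_ge_1[of s] by (intro divide_right_mono mult_left_mono) auto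
  moreover have "0 < zeta_real s * x powr (s + 1) / \<alpha>"
    using assms zeta_real_ge_1[of s] by simp
  ultimately show ?thesis
    unfolding m_factor_def using theta_pos by (simp add: divide_right_mono)
qed

lemma m_seq_bounds:
  assumes "1 < s" "0 < \<alpha>" "\<alpha> < 1" "0 < n k"
  shows "real (n k) * m_factor s \<alpha> (real (n k)) \<le> real (m_seq n s \<alpha> k)"
    and "real (m_seq n s \<alpha> k) < real (n k) * m_factor s \<alpha> (real (n k)) + 1"
proof -
  have "0 < real (n k) * m_factor s \<alpha> (real (n k))"
    using assms m_factor_pos[of s \<alpha> "real (n k)"] by simp
  then have "real (m_seq n s \<alpha> k) = of_int \<lceil>real (n k) * m_factor s \<alpha> (real (n k))\<rceil>"
    by (simp add: m_seq_eq_m_factor)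
  then show "real (n k) * m_factor s \<alpha> (real (n k)) \<le> real (m_seq n s \<alpha> k)"
    and "real (m_seq n s \<alpha> k) < real (n k) * m_factor s \<alpha> (real (n k)) + 1"
    by linarith+
qed

lemma m_seq_pos:
  assumes "1 < s" "0 < \<alpha>" "\<alpha> < 1" "0 < n k"
  shows "0 < m_seq n s \<alpha> k"
proof -
  have "0 < real (n k) * m_factor s \<alpha> (real (n k))"
    using assms m_factor_pos[of s \<alpha> "real (n k)"] by simp
  then show ?thesis
    using m_seq_bounds(1)[of s \<alpha> n k, OF assms] by linarith
qed

lemma sum_binomial_means_le:
  assumes n_pos: "\<forall>k\<ge>1. 0 < n k" and n_incr: "\<forall>k\<ge>1. n k < n (Suc k)"
    and "1 \<le> K" and s: "1 < s" and \<alpha>: "0 < \<alpha>" "\<alpha> < 1"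
  shows "(\<Sum>k=2..K. real (m_seq n s \<alpha> k) * ((real (n k) - real (n (k - 1))) / real (n k)))
       \<le> real (m_seq n s \<alpha> K) + real (n K) - real (m_seq n s \<alpha> 1)"
proof -
  define g where "g k = m_factor s \<alpha> (real (n k)) + 1" for k
  have n_ge_1: "1 \<le> real (n k)" if "1 \<le> k" for k
    using n_pos that by (simp add: Suc_le_eq)
  have g_mono: "g k \<le> g (Suc k)" if "1 \<le> k" for k
  proof -
    have "real (n k) \<le> real (n (Suc k))"
      using n_incr that by (simp add: less_imp_le)
    then show ?thesis
      unfolding g_def using m_factor_mono[OF s \<alpha>(1) n_ge_1[OF that]] by simp
  qed
  have term_le: "real (m_seq n s \<alpha> k) * ((real (n k) - real (n (k - 1))) / real (n k))
      \<le> (real (n k) - real (n (k - 1))) * g k" if "k \<in> {2..K}" for k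
  proof -
    have "n (k - 1) < n k"
      using n_incr[rule_format, of "k - 1"] that by auto
    then have increment_nonneg: "0 \<le> (real (n k) - real (n (k - 1))) / real (n k)"
      by simp
    have "real (m_seq n s \<alpha> k) \<le> real (n k) * g k"
      using m_seq_bounds(2)[of s \<alpha> n k] n_ge_1[of k] n_pos that s \<alpha> by (simp add: g_def algebra_simps)
    from mult_right_mono[OF this increment_nonneg] show ?thesis
      using n_ge_1[of k] that by (simp add: mult.commute)
  qed
  have "(\<Sum>k=2..K. real (m_seq n s \<alpha> k) * ((real (n k) - real (n (k - 1))) / real (n k)))
      \<le> (\<Sum>k=2..K. (real (n k) - real (n (k - 1))) * g k)"
    using term_le by (rule sum_mono)
  also have "\<dots> \<le> real (n K) * g K - real (n 1) * g 1"
    using g_mono \<open>1 \<le> K\<close> by (intro sum_increments_mult_le) auto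
  also have "\<dots> \<le> real (m_seq n s \<alpha> K) + real (n K) - real (m_seq n s \<alpha> 1)"
    using m_seq_bounds(1)[of s \<alpha> n K] m_seq_bounds(2)[of s \<alpha> n 1] n_pos n_ge_1[of 1] \<open>1 \<le> K\<close> s \<alpha>
    by (simp add: g_def algebra_simps)
  finally show ?thesis .
qed

theorem lemma4:
  fixes n :: "nat \<Rightarrow> nat" and K :: nat and s \<alpha> :: real
    and M :: "'a measure" and B :: "nat \<Rightarrow> 'a \<Rightarrow> nat"
  assumes n_pos: "\<forall>k\<ge>1. 0 < n k"
    and n_incr: "\<forall>k\<ge>1. n k < n (Suc k)"
    and K: "K \<ge> 2" and s: "s > 1" and \<alpha>: "0 < \<alpha>" "\<alpha> < 1"
    and M: "prob_space M"
    and indep: "prob_space.indep_vars M (\<lambda>_. count_space UNIV) B {2..K}"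
    and distr: "\<forall>k\<in>{2..K}. distr M (count_space UNIV) (B k) =
        measure_pmf (binomial_pmf (m_seq n s \<alpha> k) ((real (n k) - real (n (k - 1))) / real (n k)))"
  defines "U \<equiv> (\<lambda>\<omega>. real (\<Sum>k=2..K. B k \<omega>))"
  shows "(LINT \<omega>|M. (U \<omega> - (LINT \<omega>'|M. U \<omega>'))\<^sup>2) < (LINT \<omega>|M. U \<omega>)
       \<and> (LINT \<omega>|M. U \<omega>) \<le> real (m_seq n s \<alpha> K) + real (n K) - real (m_seq n s \<alpha> 1)"
proof -
  interpret prob_space M by (rule M)
  define p where "p k = (real (n k) - real (n (k - 1))) / real (n k)" for k
  have p: "0 < p k \<and> p k < 1" if "k \<in> {2..K}" for k
  proof -
    have "0 < n (k - 1)" "n (k - 1) < n k"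
      using n_incr[rule_format, of "k - 1"] n_pos[rule_format, of "k - 1"] that by auto
    then show ?thesis
      by (simp add: p_def divide_simps)
  qed
  then have p_prob: "p k \<in> {0..1}" if "k \<in> {2..K}" for k
    using that by (simp add: less_imp_le)
  note moments = sum_indep_binomial_moments[OF finite_atLeastAtMost indep distr[rule_format, folded p_def] p_prob]
  have U_sum: "U = (\<lambda>\<omega>. \<Sum>k=2..K. real (B k \<omega>))"
    by (simp add: U_def)
  have mean: "expectation U = (\<Sum>k=2..K. real (m_seq n s \<alpha> k) * p k)"
    unfolding U_sum by (rule moments(1))
  have "variance U = (\<Sum>k=2..K. real (m_seq n s \<alpha> k) * p k * (1 - p k))"
    unfolding U_sum by (rule moments(2))
  also have "\<dots> < (\<Sum>k=2..K. real (m_seq n s \<alpha> k) * p k)"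
  proof (rule sum_strict_mono)
    fix k assume "k \<in> {2..K}"
    then show "real (m_seq n s \<alpha> k) * p k * (1 - p k) < real (m_seq n s \<alpha> k) * p k"
      using p m_seq_pos[OF s \<alpha>, of n k] n_pos by simp
  qed (use K in simp_all)
  finally have "variance U < expectation U"
    unfolding mean .
  moreover have "expectation U \<le> real (m_seq n s \<alpha> K) + real (n K) - real (m_seq n s \<alpha> 1)"
    unfolding mean p_def using K by (intro sum_binomial_means_le[OF n_pos n_incr _ s \<alpha>]) simp
  ultimately show ?thesis
    by simp
qed

end
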